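(* Let $C\subset\mathbb{R}^l$ be closed and let $g:\mathbb{R}^n\to\mathbb{R}^l$ be continuously differentiable near $\bar x\in g^{-1}(C)$ and twice differentiable at $\bar x$. Assume that every pair $(u,\lambda)\in\mathbb{R}^n\times\mathbb{R}^l$ satisfying $u\ne0$, $\nabla g(\bar x)u\in T_C(g(\bar x))$, $\lambda\in N_C(g(\bar x);\nabla g(\bar x)u)$, $\nabla g(\bar x)^T\lambda=0$, and $\tfrac12\langle\nabla^2\langle\lambda,g\rangle(\bar x)u,u\rangle\ge\underline\chi_C(\lambda,g(\bar x);\nabla g(\bar x)u)$ has $\lambda=0$. Then the mapping $x\mapsto g(x)-C$ is metrically subregular at $(\bar x,0)$.
   Context: Metric subregularity of $x\mapsto g(x)-C$ at $(\bar x,0)$: there are $\kappa\ge0$ and a neighborhood $U$ of $\bar x$ with $\operatorname{dist}(x;g^{-1}(C))\le\kappa\operatorname{dist}(g(x);C)$ for $x\in U$. $\langle\lambda,g\rangle(x)=\langle\lambda,g(x)\rangle$. Lower curvature: $\underline\chi_\Omega(\lambda,\bar z;v):=\lim_{\epsilon\downarrow0}\inf\{\langle\lambda,v'-v\rangle/\tau: 0<\tau<\epsilon,\|v'-v\|<\epsilon,\operatorname{dist}(\lambda;N_\Omega(\bar z+\tau v'))<\epsilon\}$ ($\inf\emptyset=+\infty$, $N_\Omega(z)=\emptyset$ off $\Omega$). $T_C$ contingent cone; $N$ limiting normal cone; $N_C(\bar z;w)=\{v:\exists t_k\downarrow0,w_k\to w,v_k\to v,\ \bar z+t_kw_k\in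 C,\ v_k\in\widehat N_C(\bar z+t_kw_k)\}$ the directional limiting normal cone, $\widehat N$ the regular normal cone. *)

theory Defs
  imports "HOL-Analysis.Analysis" "HOL-Library.Extended_Real"
begin

definition tangent_cone :: "'a::real_normed_vector set \<Rightarrow> 'a \<Rightarrow> 'a set" where
  "tangent_cone C z = {w. \<exists>t wk. (\<forall>k. t k > 0) \<and> (t \<longlonglongrightarrow> 0) \<and> (wk \<longlonglongrightarrow> w)
       \<and> (\<forall>k. z + t k *\<^sub>R wk k \<in> C)}"

definition regular_normal_cone :: "'a::real_inner set \<Rightarrow> 'a \<Rightarrow> 'a set" where
  "regular_normal_cone C z = {v. z \<in> C \<and>
       (\<forall>e>0. \<exists>d>0. \<forall>z'\<in>C. norm (z' - z) < d \<longrightarrow> inner v (z' - z) \<le> e * norm (z' - z))}"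

definition limiting_normal_cone :: "'a::real_inner set \<Rightarrow> 'a \<Rightarrow> 'a set" where
  "limiting_normal_cone C z = {v. z \<in> C \<and> (\<exists>zk vk. (\<forall>k. zk k \<in> C) \<and> (zk \<longlonglongrightarrow> z)
       \<and> (vk \<longlonglongrightarrow> v) \<and> (\<forall>k. vk k \<in> regular_normal_cone C (zk k)))}"

definition dir_normal_cone :: "'a::real_inner set \<Rightarrow> 'a \<Rightarrow> 'a \<Rightarrow> 'a set" where
  "dir_normal_cone C z w = {v. \<exists>t wk vk. (\<forall>k. t k > 0) \<and> (t \<longlonglongrightarrow> 0) \<and> (wk \<longlonglongrightarrow> w)
       \<and> (vk \<longlonglongrightarrow> v) \<and> (\<forall>k. z + t k *\<^sub>R wk k \<in> C)
       \<and> (\<forall>k. vk k \<in> regular_normal_cone C (z + t k *\<^sub>R wk k))}"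

text \<open>Lower curvature; the infimum of the empty set is +infinity (Inf {} = top in ereal).
  The condition dist(lam; N(z + tau v')) < eps is written as the existence of a normal
  within distance eps (so that it is false for an empty normal cone).\<close>
definition lower_curvature :: "'a::real_inner set \<Rightarrow> 'a \<Rightarrow> 'a \<Rightarrow> 'a \<Rightarrow> ereal" where
  "lower_curvature \<Omega> lam z v = Lim (at_right (0::real)) (\<lambda>e.
      Inf {ereal (inner lam (v' - v) / \<tau>) | \<tau> v'. 0 < \<tau> \<and> \<tau> < e \<and> norm (v' - v) < e \<and>
           (\<exists>\<mu>\<in>limiting_normal_cone \<Omega> (z + \<tau> *\<^sub>R v'). dist lam \<mu> < e)})"

definition metrically_subregular :: "('a::metric_space \<Rightarrow> 'b::metric_space set) \<Rightarrow> 'a \<Rightarrow> 'b \<Rightarrow> bool" where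
  "metrically_subregular F xbar ybar \<longleftrightarrow> ybar \<in> F xbar \<and>
     (\<exists>\<kappa>\<ge>0. \<exists>U. open U \<and> xbar \<in> U \<and>
        (\<forall>x\<in>U. infdist x {x'. ybar \<in> F x'} \<le> \<kappa> * infdist ybar (F x)))"

end

theory Submission
  imports Defs
begin

text \<open>If \<open>x \<mapsto> g x - C\<close> is not metrically subregular, there are \<open>x\<^sub>k \<rightarrow> xbar\<close> with
  \<open>dist(x\<^sub>k, g\<^sup>-\<^sup>1 C) > k \<cdot> dist(g x\<^sub>k, C)\<close>. Minimizing \<open>dist(g x, C) + \<beta>\<^sub>k |x - x\<^sub>k|\<close> near \<open>x\<^sub>k\<close>
  gives \<open>y\<^sub>k \<rightarrow> xbar\<close> with nearest points \<open>c\<^sub>k \<in> C\<close>, \<open>|g y\<^sub>k - c\<^sub>k| = o(|y\<^sub>k - xbar|)\<close>, whose unit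
  regular normals \<open>\<lambda>\<^sub>k = sgn (g y\<^sub>k - c\<^sub>k)\<close> satisfy \<open>|\<nabla>g(y\<^sub>k)\<^sup>T \<lambda>\<^sub>k| \<le> \<beta>\<^sub>k \<rightarrow> 0\<close>.
  Along a subsequence the directions of \<open>y\<^sub>k - xbar\<close> and the \<open>\<lambda>\<^sub>k\<close> converge to unit vectors \<open>u\<close>, \<open>\<lambda>\<close>.
  Then \<open>(c\<^sub>k - g xbar)/|y\<^sub>k - xbar| \<rightarrow> \<nabla>g(xbar) u\<close>, so \<open>\<nabla>g(xbar) u\<close> is tangent, \<open>\<lambda>\<close> is a
  directional normal with \<open>\<nabla>g(xbar)\<^sup>T \<lambda> = 0\<close>, and a second-order expansion of \<open>\<langle>\<lambda>, g\<rangle>\<close> along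
  \<open>y\<^sub>k\<close> bounds the lower curvature by \<open>(1/2) \<langle>\<nabla>\<^sup>2\<langle>\<lambda>,g\<rangle>(xbar) u, u\<rangle>\<close>. The hypothesis forces
  \<open>\<lambda> = 0\<close>, contradicting \<open>|\<lambda>| = 1\<close>.\<close>

section \<open>Asymptotically stationary sequences\<close>

lemma infdist_zero_image_diff:
  fixes a :: "'b::real_normed_vector"
  shows "infdist 0 ((\<lambda>c. a - c) ` C) = infdist a C"
proof -
  have "(\<lambda>y. dist 0 y) ` (\<lambda>c. a - c) ` C = (\<lambda>c. dist a c) ` C"
    by (auto simp: image_image dist_norm norm_minus_commute)
  then show ?thesis unfolding infdist_def by simp
qed

lemma metrically_subregular_image_diff_iff:
  fixes g :: "'a::metric_space \<Rightarrow> 'b::real_normed_vector"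
  assumes "g xbar \<in> C"
  shows "metrically_subregular (\<lambda>x. (\<lambda>c. g x - c) ` C) xbar 0 \<longleftrightarrow>
    (\<exists>\<kappa>\<ge>0. \<exists>U. open U \<and> xbar \<in> U \<and> (\<forall>x\<in>U. infdist x (g -` C) \<le> \<kappa> * infdist (g x) C))"
proof -
  have "{x. (0::'b) \<in> (\<lambda>c. g x - c) ` C} = g -` C" by (auto simp: image_iff)
  moreover have "(0::'b) \<in> (\<lambda>c. g xbar - c) ` C" using assms by (auto simp: image_iff)
  ultimately show ?thesis unfolding metrically_subregular_def infdist_zero_image_diff by simp
qed

lemma not_locally_bounded_ratio_sequence:
  fixes \<phi> \<psi> :: "'a::metric_space \<Rightarrow> real"
  assumes unbounded: "\<not> (\<exists>\<kappa>\<ge>0. \<exists>U. open U \<and> a \<in> U \<and> (\<forall>x\<in>U. \<phi> x \<le> \<kappa> * \<psi> x))"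
    and "r > 0"
  obtains xs where "\<And>k. dist (xs k) a < r / real (Suc k)" "\<And>k. real (Suc k) * \<psi> (xs k) < \<phi> (xs k)"
proof -
  have "\<exists>x. dist x a < r / real (Suc k) \<and> real (Suc k) * \<psi> x < \<phi> x" for k
  proof -
    have "open (ball a (r / real (Suc k)))" "a \<in> ball a (r / real (Suc k))" using \<open>r > 0\<close> by auto
    then have "\<not> (\<forall>x\<in>ball a (r / real (Suc k)). \<phi> x \<le> real (Suc k) * \<psi> x)"
      using unbounded of_nat_0_le_iff by blast
    then show ?thesis by (auto simp: not_le dist_commute)
  qed
  then have "\<exists>xs. \<forall>k. dist (xs k) a < r / real (Suc k) \<and> real (Suc k) * \<psi> (xs k) < \<phi> (xs k)"
    by (intro choice allI)
  then show thesis using that by blast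
qed

lemma sgn_nearest_point_in_regular_normal_cone:
  fixes C :: "'b::real_inner set"
  assumes c: "c \<in> C" and zc: "z \<noteq> c" and nearest: "\<forall>c'\<in>C. norm (z - c) \<le> norm (z - c')"
  shows "sgn (z - c) \<in> regular_normal_cone C c"
  unfolding regular_normal_cone_def
proof (intro CollectI conjI allI impI c)
  fix e :: real assume e: "e > 0"
  define m where "m = norm (z - c)"
  have m: "m > 0" using zc by (simp add: m_def)
  show "\<exists>d>0. \<forall>z'\<in>C. norm (z' - c) < d \<longrightarrow> inner (sgn (z - c)) (z' - c) \<le> e * norm (z' - c)"
  proof (intro exI[of _ "2 * m * e"] conjI ballI impI)
    show "2 * m * e > 0" using m e by simp
    fix z' assume z': "z' \<in> C" "norm (z' - c) < 2 * m * e"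
    have "m\<^sup>2 \<le> (norm ((z - c) - (z' - c)))\<^sup>2" using nearest z' m by (simp add: m_def power_mono)
    also have "\<dots> = m\<^sup>2 - 2 * inner (z - c) (z' - c) + (norm (z' - c))\<^sup>2"
      unfolding m_def power2_norm_eq_inner by (simp add: inner_diff_left inner_diff_right inner_commute)
    finally have "inner (z - c) (z' - c) \<le> (norm (z' - c))\<^sup>2 / 2" by simp
    also have "\<dots> \<le> m * e * norm (z' - c)"
    proof -
      have "(norm (z' - c))\<^sup>2 \<le> (2 * m * e) * norm (z' - c)"
        using z' by (simp add: power2_eq_square mult_right_mono)
      then show ?thesis by simp
    qed
    finally have "inner (z - c) (z' - c) / m \<le> e * norm (z' - c)"
      using m by (simp add: divide_simps mult.commute mult.left_commute)
    then show "inner (sgn (z - c)) (z' - c) \<le> e * norm (z' - c)"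
      by (simp add: sgn_div_norm m_def divide_inverse mult.commute)
  qed
qed

lemma DERIV_ge_of_right_increments:
  fixes h :: "real \<Rightarrow> real"
  assumes "(h has_real_derivative D) (at 0)"
    and "\<forall>\<^sub>F s in at_right 0. a * s \<le> h s - h 0"
  shows "a \<le> D"
proof (rule tendsto_lowerbound)
  show "((\<lambda>s. (h s - h 0) / s) \<longlongrightarrow> D) (at_right 0)"
    using assms(1) unfolding DERIV_def by (auto intro: tendsto_mono at_le)
  show "\<forall>\<^sub>F s in at_right 0. a \<le> (h s - h 0) / s"
    using assms(2) eventually_at_right_less[of "0::real"]
    by eventually_elim (simp add: pos_le_divide_eq)
qed simp

lemma first_order_condition_penalized_distance:
  fixes g :: "'a::real_normed_vector \<Rightarrow> 'b::real_inner"
  assumes deriv: "(g has_derivative Dg) (at y)"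
    and U: "open U" "y \<in> U"
    and min: "\<forall>z\<in>U. infdist (g y) C + \<beta> * norm (y - x0) \<le> infdist (g z) C + \<beta> * norm (z - x0)"
    and c: "c \<in> C" "infdist (g y) C = dist (g y) c" "g y \<noteq> c"
    and "\<beta> \<ge> 0"
  shows "\<bar>inner (sgn (g y - c)) (Dg v)\<bar> \<le> \<beta> * norm v"
proof -
  have lin: "linear Dg" using deriv by (simp add: has_derivative_def bounded_linear.linear)
  have lower: "- \<beta> * norm v \<le> inner (sgn (g y - c)) (Dg v)" for v
  proof (rule DERIV_ge_of_right_increments)
    define h where "h s = norm (g (y + s *\<^sub>R v) - c)" for s
    have "((\<lambda>s. y + s *\<^sub>R v) has_derivative (\<lambda>s. s *\<^sub>R v)) (at 0)"
      by (auto intro!: derivative_eq_intros)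
    from has_derivative_compose[OF this, of g Dg] deriv
    have "((\<lambda>s. g (y + s *\<^sub>R v) - c) has_derivative (\<lambda>s. s *\<^sub>R Dg v)) (at 0)"
      by (auto intro!: derivative_eq_intros simp: linear.scaleR[OF lin])
    from has_derivative_compose[OF this has_derivative_norm] c(3)
    show "(h has_real_derivative inner (sgn (g y - c)) (Dg v)) (at 0)"
      unfolding h_def has_field_derivative_def by (simp add: inner_commute mult.commute[of _ "inner _ _"])
    have "((\<lambda>s. y + s *\<^sub>R v) \<longlongrightarrow> y) (at_right 0)"
      by (auto intro!: tendsto_eq_intros)
    then have "\<forall>\<^sub>F s in at_right 0. y + s *\<^sub>R v \<in> U" using U by (rule topological_tendstoD)
    moreover have "\<forall>\<^sub>F s in at_right (0::real). s > 0" by (rule eventually_at_right_less)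
    ultimately show "\<forall>\<^sub>F s in at_right 0. - \<beta> * norm v * s \<le> h s - h 0"
    proof eventually_elim
      case (elim s)
      have "infdist (g (y + s *\<^sub>R v)) C \<le> h s"
        unfolding h_def using c(1) infdist_le[of c C] by (simp add: dist_norm)
      moreover have "\<beta> * norm (y + s *\<^sub>R v - x0) \<le> \<beta> * (norm (y - x0) + s * norm v)"
        using norm_triangle_ineq[of "y - x0" "s *\<^sub>R v"] elim \<open>\<beta> \<ge> 0\<close>
        by (intro mult_left_mono) (auto simp: algebra_simps)
      ultimately show ?case
        using min elim c(2) by (force simp: h_def dist_norm algebra_simps)
    qed
  qed
  from lower[of v] lower[of "- v"] show ?thesis
    by (simp add: linear_neg[OF lin])
qed

text \<open>Compactness stands in for Ekeland's principle: the penalty weight \<open>4\<rho>/\<delta>\<close> keeps the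
  minimizer within \<open>\<delta>/4\<close> of \<open>x0\<close>, hence off \<open>g\<^sup>-\<^sup>1 C\<close> and interior to the ball.\<close>

lemma penalized_distance_minimizer:
  fixes g :: "'a::euclidean_space \<Rightarrow> 'b::euclidean_space"
  assumes C: "closed C" "C \<noteq> {}"
    and deriv: "\<forall>x\<in>cball x0 (\<delta>/2). (g has_derivative Dg x) (at x)"
    and \<delta>: "\<delta> = infdist x0 (g -` C)" "\<delta> > 0"
    and \<rho>: "\<rho> = infdist (g x0) C" "\<rho> > 0"
  obtains y c where "norm (y - x0) \<le> \<delta>/4" "c \<in> C" "g y \<noteq> c" "norm (g y - c) \<le> \<rho>"
    "\<forall>c'\<in>C. norm (g y - c) \<le> norm (g y - c')"
    "\<forall>v. \<bar>inner (sgn (g y - c)) (Dg y v)\<bar> \<le> 4 * \<rho> / \<delta> * norm v"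
proof -
  define \<beta> where "\<beta> = 4 * \<rho> / \<delta>"
  have \<beta>: "\<beta> > 0" using \<delta>(2) \<rho>(2) by (simp add: \<beta>_def)
  define K where "K = cball x0 (\<delta>/2)"
  define F where "F x = infdist (g x) C + \<beta> * norm (x - x0)" for x
  have "continuous_on K g"
    using deriv unfolding K_def by (meson continuous_at_imp_continuous_on has_derivative_continuous)
  then have "continuous_on K F" unfolding F_def by (intro continuous_intros)
  moreover have "compact K" "K \<noteq> {}" using \<delta>(2) by (auto simp: K_def)
  ultimately obtain y where y: "y \<in> K" "\<forall>z\<in>K. F y \<le> F z"
    using continuous_attains_inf by blast
  have "x0 \<in> K" using \<delta>(2) by (simp add: K_def)
  then have "F y \<le> \<rho>" using y(2) by (force simp: F_def \<rho>(1))
  then have Fy: "infdist (g y) C + \<beta> * norm (y - x0) \<le> \<rho>" by (simp add: F_def)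
  then have "\<beta> * norm (y - x0) \<le> \<rho>" using infdist_nonneg[of "g y" C] by linarith
  then have ny: "norm (y - x0) \<le> \<delta>/4"
    using \<beta> \<delta>(2) by (simp add: \<beta>_def field_simps)
  obtain c where c: "c \<in> C" "infdist (g y) C = dist (g y) c"
    using infdist_attains_inf[OF C] by blast
  have "g y \<noteq> c"
  proof
    assume "g y = c"
    then have "\<delta> \<le> dist x0 y" using infdist_le[of y "g -` C" x0] \<delta>(1) c(1) by simp
    then show False using ny \<delta>(2) by (simp add: dist_norm norm_minus_commute)
  qed
  moreover have "norm (g y - c) \<le> \<rho>" using Fy c \<beta> by (simp add: dist_norm) (smt (verit) norm_ge_zero mult_nonneg_nonneg)
  moreover have "\<forall>c'\<in>C. norm (g y - c) \<le> norm (g y - c')"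
    using c by (metis dist_norm infdist_le)
  moreover have "\<bar>inner (sgn (g y - c)) (Dg y v)\<bar> \<le> \<beta> * norm v" for v
  proof (rule first_order_condition_penalized_distance)
    show "(g has_derivative Dg y) (at y)" using deriv y(1) by (simp add: K_def)
    show "y \<in> ball x0 (\<delta>/2)" using ny \<delta>(2) by (simp add: dist_norm norm_minus_commute)
    show "\<forall>z\<in>ball x0 (\<delta>/2). infdist (g y) C + \<beta> * norm (y - x0) \<le> infdist (g z) C + \<beta> * norm (z - x0)"
      using y(2) by (auto simp: F_def K_def)
  qed (use c \<open>g y \<noteq> c\<close> \<beta> in auto)
  ultimately show thesis using that ny c(1) unfolding \<beta>_def by blast
qed

lemma approximately_stationary_point:
  fixes g :: "'a::euclidean_space \<Rightarrow> 'b::euclidean_space"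
  assumes C: "closed C" "g xbar \<in> C"
    and deriv: "\<forall>x\<in>cball x0 (norm (x0 - xbar)). (g has_derivative Dg x) (at x)"
    and n: "n > 0" "n * infdist (g x0) C < infdist x0 (g -` C)"
  obtains y c where "0 < norm (y - xbar)" "norm (y - xbar) \<le> 2 * norm (x0 - xbar)"
    "c \<in> C" "g y \<noteq> c" "sgn (g y - c) \<in> regular_normal_cone C c"
    "norm (g y - c) \<le> 2 / n * norm (y - xbar)"
    "\<forall>v. \<bar>inner (sgn (g y - c)) (Dg y v)\<bar> \<le> 4 / n * norm v"
proof -
  define \<delta> where "\<delta> = infdist x0 (g -` C)"
  define \<rho> where "\<rho> = infdist (g x0) C"
  have Cne: "C \<noteq> {}" using C(2) by blast
  have \<delta>\<rho>: "n * \<rho> < \<delta>" using n(2) by (simp add: \<delta>_def \<rho>_def)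
  have \<delta>: "\<delta> > 0" using \<delta>\<rho> n(1) infdist_nonneg[of "g x0" C] unfolding \<rho>_def
    by (smt (verit) mult_nonneg_nonneg)
  have \<rho>: "\<rho> > 0"
  proof (rule ccontr)
    assume "\<not> \<rho> > 0"
    then have "g x0 \<in> C"
      using in_closed_iff_infdist_zero[OF C(1) Cne] infdist_nonneg[of "g x0" C] by (simp add: \<rho>_def)
    then show False using \<delta> by (simp add: \<delta>_def)
  qed
  have \<delta>_le: "\<delta> \<le> norm (x0 - xbar)"
    using infdist_le[of xbar "g -` C" x0] C(2) by (simp add: \<delta>_def dist_norm)
  have "\<forall>x\<in>cball x0 (\<delta>/2). (g has_derivative Dg x) (at x)"
    using deriv \<delta>_le \<delta> by (simp add: subset_cball[THEN subsetD])
  then obtain y c where y: "norm (y - x0) \<le> \<delta>/4" "c \<in> C" "g y \<noteq> c" "norm (g y - c) \<le> \<rho>"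
      "\<forall>c'\<in>C. norm (g y - c) \<le> norm (g y - c')"
      "\<forall>v. \<bar>inner (sgn (g y - c)) (Dg y v)\<bar> \<le> 4 * \<rho> / \<delta> * norm v"
    using penalized_distance_minimizer[OF C(1) Cne _ \<delta>_def \<delta> \<rho>_def \<rho>] by blast
  have t_low: "3 * \<delta> / 4 \<le> norm (y - xbar)"
    using y(1) \<delta>_le norm_triangle_ineq[of "y - xbar" "x0 - y"] by (simp add: norm_minus_commute)
  have "norm (y - xbar) \<le> norm (y - x0) + norm (x0 - xbar)"
    using norm_triangle_ineq[of "y - x0" "x0 - xbar"] by simp
  then have t_up: "norm (y - xbar) \<le> 2 * norm (x0 - xbar)" using y(1) \<delta>_le \<delta> by linarith
  have "norm (g y - c) \<le> 2 / n * norm (y - xbar)"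
  proof -
    have "n * norm (g y - c) \<le> \<delta>" using y(4) \<delta>\<rho> n(1) by (smt (verit) mult_left_mono)
    then show ?thesis using t_low n(1) norm_ge_zero[of "y - xbar"] by (simp add: field_simps, linarith)
  qed
  moreover have "\<bar>inner (sgn (g y - c)) (Dg y v)\<bar> \<le> 4 / n * norm v" for v
  proof -
    have "4 * \<rho> / \<delta> \<le> 4 / n" using \<delta>\<rho> \<delta> n(1) by (simp add: field_simps)
    then show ?thesis using y(6) by (meson mult_right_mono norm_ge_zero order_trans)
  qed
  moreover have "0 < norm (y - xbar)" using t_low \<delta> by linarith
  ultimately show thesis
    by (intro that[OF _ t_up y(2,3) sgn_nearest_point_in_regular_normal_cone[OF y(2,3,5)]]) auto
qed

lemma LIMSEQ_zero_by_const_over_Suc: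
  fixes a :: "nat \<Rightarrow> 'b::real_normed_vector"
  assumes "\<And>k. norm (a k) \<le> M / real (Suc k)"
  shows "a \<longlonglongrightarrow> 0"
proof (rule Lim_null_comparison)
  show "\<forall>\<^sub>F k in sequentially. norm (a k) \<le> M / real (Suc k)" using assms by simp
  show "(\<lambda>k. M / real (Suc k)) \<longlonglongrightarrow> 0"
    using LIMSEQ_Suc[OF lim_const_over_n[of M]] by simp
qed

text \<open>What a failure of metric subregularity produces: \<open>\<beta>\<^sub>k\<close> bounds the residual of the first-order
  condition at \<open>y\<^sub>k\<close> for the unit normal \<open>sgn (g y\<^sub>k - c\<^sub>k)\<close>.\<close>

definition asymptotically_stationary ::
    "('a::real_normed_vector \<Rightarrow> 'b::real_inner) \<Rightarrow> ('a \<Rightarrow> 'a \<Rightarrow> 'b) \<Rightarrow> 'b set \<Rightarrow> 'a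
      \<Rightarrow> (nat \<Rightarrow> 'a) \<Rightarrow> (nat \<Rightarrow> 'b) \<Rightarrow> (nat \<Rightarrow> real) \<Rightarrow> bool" where
  "asymptotically_stationary g Dg C xbar y c \<beta> \<longleftrightarrow>
     (\<forall>k. y k \<noteq> xbar \<and> c k \<in> C \<and> g (y k) \<noteq> c k \<and> sgn (g (y k) - c k) \<in> regular_normal_cone C (c k)
        \<and> (\<forall>v. \<bar>inner (sgn (g (y k) - c k)) (Dg (y k) v)\<bar> \<le> \<beta> k * norm v))
     \<and> y \<longlonglongrightarrow> xbar \<and> (\<lambda>k. norm (g (y k) - c k) / norm (y k - xbar)) \<longlonglongrightarrow> 0 \<and> \<beta> \<longlonglongrightarrow> 0"

lemma asymptotically_stationary_subseq:
  assumes "asymptotically_stationary g Dg C xbar y c \<beta>" "strict_mono r"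
  shows "asymptotically_stationary g Dg C xbar (y \<circ> r) (c \<circ> r) (\<beta> \<circ> r)"
proof -
  note seq = assms(1)[unfolded asymptotically_stationary_def]
  then have "(y \<circ> r) \<longlonglongrightarrow> xbar" "(\<beta> \<circ> r) \<longlonglongrightarrow> 0"
    "((\<lambda>k. norm (g (y k) - c k) / norm (y k - xbar)) \<circ> r) \<longlonglongrightarrow> 0"
    using LIMSEQ_subseq_LIMSEQ[OF _ assms(2)] by blast+
  with seq show ?thesis unfolding asymptotically_stationary_def by (simp add: o_def)
qed

lemma asymptotically_stationary_sequenceE:
  fixes g :: "'a::euclidean_space \<Rightarrow> 'b::euclidean_space"
  assumes C: "closed C" "g xbar \<in> C"
    and U: "open U" "xbar \<in> U" "\<forall>x\<in>U. (g has_derivative Dg x) (at x)"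
    and not_bounded: "\<not> (\<exists>\<kappa>\<ge>0. \<exists>V. open V \<and> xbar \<in> V \<and>
                        (\<forall>x\<in>V. infdist x (g -` C) \<le> \<kappa> * infdist (g x) C))"
  obtains y c \<beta> where "asymptotically_stationary g Dg C xbar y c \<beta>"
proof -
  obtain R where R: "R > 0" "ball xbar R \<subseteq> U" using U by (meson openE)
  then obtain xs where xs: "\<And>k. dist (xs k) xbar < R/2 / real (Suc k)"
      "\<And>k. real (Suc k) * infdist (g (xs k)) C < infdist (xs k) (g -` C)"
    using not_locally_bounded_ratio_sequence[OF not_bounded] by (metis half_gt_zero)
  define P where "P k y c \<longleftrightarrow> 0 < norm (y - xbar) \<and> norm (y - xbar) \<le> 2 * norm (xs k - xbar)
      \<and> c \<in> C \<and> g y \<noteq> c \<and> sgn (g y - c) \<in> regular_normal_cone C c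
      \<and> norm (g y - c) \<le> 2 / real (Suc k) * norm (y - xbar)
      \<and> (\<forall>v. \<bar>inner (sgn (g y - c)) (Dg y v)\<bar> \<le> 4 / real (Suc k) * norm v)" for k y c
  have "\<forall>k. \<exists>y c. P k y c"
  proof
    fix k
    have "R/2 / real (Suc k) \<le> R/2" using R(1) by (simp add: divide_le_eq)
    then have "norm (xs k - xbar) < R/2" using xs(1)[of k] dist_norm[of "xs k" xbar] by linarith
    then have "dist xbar x < R" if "dist (xs k) x \<le> norm (xs k - xbar)" for x
      using dist_triangle[of xbar x "xs k"] that by (simp add: dist_norm norm_minus_commute)
    then have "cball (xs k) (norm (xs k - xbar)) \<subseteq> ball xbar R" by auto
    then have "\<forall>x\<in>cball (xs k) (norm (xs k - xbar)). (g has_derivative Dg x) (at x)" using R(2) U(3) by blast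
    then show "\<exists>y c. P k y c"
      unfolding P_def by (rule approximately_stationary_point[OF C _ _ xs(2)]) auto
  qed
  then obtain y where "\<forall>k. \<exists>c. P k (y k) c" by (rule choice[THEN exE])
  then obtain c where yc: "\<forall>k. P k (y k) (c k)" by (rule choice[THEN exE])
  have t_bound: "norm (y k - xbar) \<le> R / real (Suc k)" for k
  proof -
    have "norm (y k - xbar) \<le> 2 * norm (xs k - xbar)" using yc by (simp add: P_def)
    also have "\<dots> \<le> R / real (Suc k)" using xs(1)[of k] by (simp add: dist_norm field_simps)
    finally show ?thesis .
  qed
  have "\<forall>k. y k \<noteq> xbar" using yc by (auto simp: P_def)
  moreover have "y \<longlonglongrightarrow> xbar"
    using LIMSEQ_zero_by_const_over_Suc[of "\<lambda>k. y k - xbar", OF t_bound] by (simp add: LIM_zero_iff)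
  moreover have "(\<lambda>k. norm (g (y k) - c k) / norm (y k - xbar)) \<longlonglongrightarrow> 0"
    by (rule LIMSEQ_zero_by_const_over_Suc[of _ 2]) (use yc in \<open>auto simp: P_def divide_simps\<close>)
  moreover have "(\<lambda>k. 4 / real (Suc k)) \<longlonglongrightarrow> 0"
    by (rule LIMSEQ_zero_by_const_over_Suc[of _ 4]) simp
  ultimately show thesis
    using that[of y c "\<lambda>k. 4 / real (Suc k)"] yc unfolding P_def asymptotically_stationary_def by blast
qed

section \<open>Second-order expansion\<close>

lemma inner_second_order_remainder_bound:
  fixes g :: "'a::real_normed_vector \<Rightarrow> 'b::real_inner" and g' g'' :: "'a \<Rightarrow> ('a \<Rightarrow>\<^sub>L 'b)"
  assumes deriv: "\<forall>s\<in>{0..1}. (g has_derivative blinfun_apply (g' (x + s *\<^sub>R d))) (at (x + s *\<^sub>R d))"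
    and lin: "linear g''"
    and close: "\<forall>s\<in>{0..1}. norm (g' (x + s *\<^sub>R d) - g' x - g'' (s *\<^sub>R d)) \<le> \<epsilon> * norm (s *\<^sub>R d)"
    and "\<epsilon> \<ge> 0"
  shows "\<bar>inner l (g (x + d) - g x - g' x d) - 1/2 * inner l (g'' d d)\<bar> \<le> norm l * \<epsilon> * (norm d)\<^sup>2"
proof -
  define \<phi> where "\<phi> s = inner l (g (x + s *\<^sub>R d)) - s * inner l (g' x d) - s\<^sup>2/2 * inner l (g'' d d)" for s
  define \<phi>' where "\<phi>' s = inner l ((g' (x + s *\<^sub>R d) - g' x - g'' (s *\<^sub>R d)) d)" for s
  have "(\<phi> has_real_derivative \<phi>' s) (at s)" if s: "0 \<le> s" "s \<le> 1" for s
  proof -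
    have "((\<lambda>s. x + s *\<^sub>R d) has_derivative (\<lambda>h. h *\<^sub>R d)) (at s)"
      by (auto intro!: derivative_eq_intros)
    moreover have "(g has_derivative blinfun_apply (g' (x + s *\<^sub>R d))) (at (x + s *\<^sub>R d))"
      using deriv s by auto
    ultimately have "((\<lambda>s. g (x + s *\<^sub>R d)) has_derivative (\<lambda>h. h *\<^sub>R g' (x + s *\<^sub>R d) d)) (at s)"
      by (auto dest: has_derivative_compose simp: blinfun.scaleR_right)
    then have "((\<lambda>s. inner l (g (x + s *\<^sub>R d))) has_real_derivative inner l (g' (x + s *\<^sub>R d) d)) (at s)"
      unfolding has_field_derivative_def
      by (auto dest: has_derivative_inner_right[of _ _ _ l] simp: mult.commute[of _ "inner _ _"])
    then have "(\<phi> has_real_derivative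
        inner l (g' (x + s *\<^sub>R d) d) - inner l (g' x d) - s * inner l (g'' d d)) (at s)"
      unfolding \<phi>_def by (auto intro!: derivative_eq_intros simp: algebra_simps)
    then show ?thesis
      by (simp add: \<phi>'_def linear.scaleR[OF lin] blinfun.diff_left blinfun.scaleR_left inner_diff_right)
  qed
  then obtain z where z: "0 < z" "z < 1" "\<phi> 1 - \<phi> 0 = \<phi>' z"
    using MVT2[of 0 1 \<phi> \<phi>'] by auto
  have "\<bar>\<phi>' z\<bar> \<le> norm l * (norm (g' (x + z *\<^sub>R d) - g' x - g'' (z *\<^sub>R d)) * norm d)"
    unfolding \<phi>'_def
    by (rule order_trans[OF Cauchy_Schwarz_ineq2 mult_left_mono[OF norm_blinfun norm_ge_zero]])
  also have "\<dots> \<le> norm l * (\<epsilon> * norm (z *\<^sub>R d) * norm d)"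
    using close z by (intro mult_left_mono mult_right_mono) auto
  also have "\<dots> \<le> norm l * (\<epsilon> * norm d * norm d)"
    using z \<open>\<epsilon> \<ge> 0\<close> by (intro mult_left_mono mult_right_mono) (auto simp: mult_left_le_one_le)
  finally show ?thesis using z(3) by (simp add: \<phi>_def inner_diff_right power2_eq_square mult.assoc)
qed

lemma inner_second_order_expansion:
  fixes g :: "'a::real_normed_vector \<Rightarrow> 'b::real_inner" and g' g'' :: "'a \<Rightarrow> ('a \<Rightarrow>\<^sub>L 'b)"
  assumes U: "open U" "xbar \<in> U" "\<forall>x\<in>U. (g has_derivative blinfun_apply (g' x)) (at x)"
    and twice: "(g' has_derivative g'') (at xbar)"
  shows "((\<lambda>y. (inner l (g y - g xbar - g' xbar (y - xbar))
     - 1/2 * inner l (g'' (y - xbar) (y - xbar))) / (norm (y - xbar))\<^sup>2) \<longlongrightarrow> 0) (at xbar)"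
proof (rule LIM_I)
  fix e :: real assume e: "e > 0"
  define N where "N = norm l + 1"
  have N: "N > 0" "norm l \<le> N" unfolding N_def using norm_ge_zero[of l] by linarith+
  define \<epsilon> where "\<epsilon> = e / 2 / N"
  have "\<epsilon> > 0" using e N by (simp add: \<epsilon>_def)
  have "norm l * \<epsilon> \<le> N * \<epsilon>" using \<open>\<epsilon> > 0\<close> N by simp
  also have "\<dots> < e" using e N by (simp add: \<epsilon>_def)
  finally have \<epsilon>: "\<epsilon> > 0" "norm l * \<epsilon> < e" using \<open>\<epsilon> > 0\<close> by auto
  have lin: "linear g''" using twice by (simp add: has_derivative_def bounded_linear.linear)
  from twice[unfolded has_derivative_at_alt] \<epsilon>(1) obtain d1 where d1: "d1 > 0"
    "\<forall>y. norm (y - xbar) < d1 \<longrightarrow> norm (g' y - g' xbar - g'' (y - xbar)) \<le> \<epsilon> * norm (y - xbar)"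
    by blast
  from U obtain d2 where d2: "d2 > 0" "ball xbar d2 \<subseteq> U" by (meson openE)
  show "\<exists>r>0. \<forall>y. y \<noteq> xbar \<and> norm (y - xbar) < r \<longrightarrow>
     norm ((inner l (g y - g xbar - g' xbar (y - xbar))
     - 1/2 * inner l (g'' (y - xbar) (y - xbar))) / (norm (y - xbar))\<^sup>2 - 0) < e"
  proof (intro exI[of _ "min d1 d2"] conjI allI impI)
    fix y assume y: "y \<noteq> xbar \<and> norm (y - xbar) < min d1 d2"
    have segment: "norm ((xbar + s *\<^sub>R (y - xbar)) - xbar) < min d1 d2" if "s \<in> {0..1}" for s :: real
    proof -
      have "norm ((xbar + s *\<^sub>R (y - xbar)) - xbar) = s * norm (y - xbar)" using that by simp
      moreover have "s * norm (y - xbar) \<le> norm (y - xbar)" using that by (simp add: mult_left_le_one_le)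
      ultimately show ?thesis unfolding min_less_iff_conj using y by linarith
    qed
    have "\<bar>inner l (g (xbar + (y - xbar)) - g xbar - g' xbar (y - xbar))
        - 1/2 * inner l (g'' (y - xbar) (y - xbar))\<bar> \<le> norm l * \<epsilon> * (norm (y - xbar))\<^sup>2"
    proof (rule inner_second_order_remainder_bound[OF _ lin])
      show "\<forall>s\<in>{0..1}. (g has_derivative blinfun_apply (g' (xbar + s *\<^sub>R (y - xbar))))
          (at (xbar + s *\<^sub>R (y - xbar)))"
        using segment d2(2) U(3) by (auto simp: dist_norm norm_minus_commute subset_iff)
      show "\<forall>s\<in>{0..1}. norm (g' (xbar + s *\<^sub>R (y - xbar)) - g' xbar - g'' (s *\<^sub>R (y - xbar)))
          \<le> \<epsilon> * norm (s *\<^sub>R (y - xbar))"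
      proof
        fix s :: real assume "s \<in> {0..1}"
        then show "norm (g' (xbar + s *\<^sub>R (y - xbar)) - g' xbar - g'' (s *\<^sub>R (y - xbar)))
          \<le> \<epsilon> * norm (s *\<^sub>R (y - xbar))"
          using segment d1(2)[rule_format, of "xbar + s *\<^sub>R (y - xbar)"] by simp
      qed
    qed (use \<epsilon> in simp)
    moreover have "norm l * \<epsilon> * (norm (y - xbar))\<^sup>2 < e * (norm (y - xbar))\<^sup>2"
      using \<epsilon>(2) y by simp
    ultimately have "\<bar>inner l (g y - g xbar - g' xbar (y - xbar))
        - 1/2 * inner l (g'' (y - xbar) (y - xbar))\<bar> < e * (norm (y - xbar))\<^sup>2"
      by simp
    then show "norm ((inner l (g y - g xbar - g' xbar (y - xbar))
     - 1/2 * inner l (g'' (y - xbar) (y - xbar))) / (norm (y - xbar))\<^sup>2 - 0) < e"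
      using y by (simp add: divide_less_eq)
  qed (use d1 d2 in simp)
qed

lemma inner_second_order_quotient_tendsto:
  fixes g :: "'a::real_normed_vector \<Rightarrow> 'b::real_inner" and g' g'' :: "'a \<Rightarrow> ('a \<Rightarrow>\<^sub>L 'b)"
  assumes U: "open U" "xbar \<in> U" "\<forall>x\<in>U. (g has_derivative blinfun_apply (g' x)) (at x)"
    and twice: "(g' has_derivative g'') (at xbar)"
    and y: "\<forall>k. y k \<noteq> xbar" "y \<longlonglongrightarrow> xbar" "(\<lambda>k. sgn (y k - xbar)) \<longlonglongrightarrow> u"
  shows "(\<lambda>k. inner l (g (y k) - g xbar - g' xbar (y k - xbar)) / (norm (y k - xbar))\<^sup>2)
    \<longlonglongrightarrow> 1/2 * inner l (g'' u u)"
proof -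
  define Q where "Q z = (inner l (g z - g xbar - g' xbar (z - xbar))
     - 1/2 * inner l (g'' (z - xbar) (z - xbar))) / (norm (z - xbar))\<^sup>2" for z
  have bl: "bounded_linear g''" using twice by (simp add: has_derivative_def)
  have "filterlim y (at xbar) sequentially" using y(1,2) by (intro filterlim_atI) auto
  from filterlim_compose[OF inner_second_order_expansion[OF U twice, of l, folded Q_def] this]
  have "(\<lambda>k. Q (y k)) \<longlonglongrightarrow> 0" by simp
  moreover have "(\<lambda>k. inner l (g'' (sgn (y k - xbar)) (sgn (y k - xbar)))) \<longlonglongrightarrow> inner l (g'' u u)"
    using blinfun.tendsto[OF bounded_linear.tendsto[OF bl y(3)] y(3)] by (rule tendsto_inner[OF tendsto_const])
  ultimately have "(\<lambda>k. Q (y k) + 1/2 * inner l (g'' (sgn (y k - xbar)) (sgn (y k - xbar))))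
      \<longlonglongrightarrow> 0 + 1/2 * inner l (g'' u u)"
    by (intro tendsto_add tendsto_mult tendsto_const)
  moreover have "Q (y k) + 1/2 * inner l (g'' (sgn (y k - xbar)) (sgn (y k - xbar)))
      = inner l (g (y k) - g xbar - g' xbar (y k - xbar)) / (norm (y k - xbar))\<^sup>2" for k
  proof -
    have "y k - xbar = norm (y k - xbar) *\<^sub>R sgn (y k - xbar)" using y(1) by (simp add: sgn_div_norm)
    then have "inner l (g'' (y k - xbar) (y k - xbar))
        = (norm (y k - xbar))\<^sup>2 * inner l (g'' (sgn (y k - xbar)) (sgn (y k - xbar)))"
      by (metis (no_types) blinfun.scaleR_left blinfun.scaleR_right inner_scaleR_right
          linear.scaleR[OF bounded_linear.linear[OF bl]] power2_eq_square scaleR_scaleR)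
    then show ?thesis using y(1) by (simp add: Q_def field_simps)
  qed
  ultimately show ?thesis by simp
qed

section \<open>Lower curvature along sequences\<close>

lemma Lim_at_right_antimono_le:
  fixes \<Phi> :: "real \<Rightarrow> ereal"
  assumes antimono: "\<And>e1 e2. 0 < e1 \<Longrightarrow> e1 \<le> e2 \<Longrightarrow> \<Phi> e2 \<le> \<Phi> e1"
    and bound: "\<And>e. 0 < e \<Longrightarrow> \<Phi> e \<le> A"
  shows "Lim (at_right 0) \<Phi> \<le> A"
proof -
  define S where "S = (SUP e\<in>{0<..}. \<Phi> e)"
  have "(\<Phi> \<longlongrightarrow> S) (at_right 0)"
  proof (rule order_tendstoI)
    fix a assume "a < S"
    then obtain e0 where e0: "e0 > 0" "a < \<Phi> e0" unfolding S_def less_SUP_iff by auto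
    then have "\<forall>e>0. e < e0 \<longrightarrow> a < \<Phi> e"
      using antimono by (meson less_eq_real_def order_less_le_trans)
    then show "\<forall>\<^sub>F e in at_right 0. a < \<Phi> e"
      using e0 eventually_at_right[of 0 e0] by auto
  next
    fix a assume "S < a"
    then have "\<forall>e>0. \<Phi> e < a"
      unfolding S_def by (meson SUP_upper greaterThan_iff order_le_less_trans)
    then show "\<forall>\<^sub>F e in at_right 0. \<Phi> e < a"
      using eventually_at_right_less[of "0::real"] by (auto elim: eventually_mono)
  qed
  then have "Lim (at_right 0) \<Phi> = S" by (rule tendsto_Lim[rotated]) simp
  also have "S \<le> A" unfolding S_def by (rule SUP_least) (use bound in auto)
  finally show ?thesis .
qed

lemma lower_curvature_le_of_sequences:
  fixes C :: "'b::real_inner set"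
  assumes t: "\<forall>k. t k > 0" "t \<longlonglongrightarrow> 0"
    and lim: "v \<longlonglongrightarrow> w" "\<mu> \<longlonglongrightarrow> lam"
    and normal: "\<forall>k. \<mu> k \<in> limiting_normal_cone C (z + t k *\<^sub>R v k)"
    and bound: "\<forall>\<^sub>F k in sequentially. inner lam (v k - w) / t k \<le> P k"
    and P: "P \<longlonglongrightarrow> a"
  shows "lower_curvature C lam z w \<le> ereal a"
proof -
  define Q where "Q e = {ereal (inner lam (v' - w) / \<tau>) | \<tau> v'. 0 < \<tau> \<and> \<tau> < e \<and> norm (v' - w) < e \<and>
           (\<exists>\<mu>\<in>limiting_normal_cone C (z + \<tau> *\<^sub>R v'). dist lam \<mu> < e)}" for e
  have "Lim (at_right 0) (\<lambda>e. Inf (Q e)) \<le> ereal a"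
  proof (rule Lim_at_right_antimono_le)
    fix e1 e2 :: real assume "0 < e1" "e1 \<le> e2"
    have "Q e1 \<subseteq> Q e2"
    proof
      fix x assume "x \<in> Q e1"
      then obtain \<tau> v' \<nu> where x: "x = ereal (inner lam (v' - w) / \<tau>)" "0 < \<tau>" "\<tau> < e1"
          "norm (v' - w) < e1" "\<nu> \<in> limiting_normal_cone C (z + \<tau> *\<^sub>R v')" "dist lam \<nu> < e1"
        unfolding Q_def by blast
      moreover have "\<tau> < e2" "norm (v' - w) < e2" "dist lam \<nu> < e2" using x \<open>e1 \<le> e2\<close> by auto
      ultimately show "x \<in> Q e2" unfolding Q_def by blast
    qed
    then show "Inf (Q e2) \<le> Inf (Q e1)" by (rule Inf_superset_mono)
  next
    fix e :: real assume e: "0 < e"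
    show "Inf (Q e) \<le> ereal a"
    proof (rule ereal_le_epsilon2)
      fix \<eta> :: real assume "0 < \<eta>"
      have "\<forall>\<^sub>F k in sequentially. t k < e \<and> dist (v k) w < e \<and> dist (\<mu> k) lam < e
          \<and> inner lam (v k - w) / t k \<le> P k \<and> P k < a + \<eta>"
        using order_tendstoD(2)[OF t(2) e] tendstoD[OF lim(1) e] tendstoD[OF lim(2) e] bound
          order_tendstoD(2)[OF P, of "a + \<eta>"] \<open>0 < \<eta>\<close>
        by (simp add: eventually_conj_iff)
      then obtain k where k: "t k < e" "dist (v k) w < e" "dist (\<mu> k) lam < e"
          "inner lam (v k - w) / t k \<le> P k" "P k < a + \<eta>"
        by (auto dest: eventually_happens)
      have "ereal (inner lam (v k - w) / t k) \<in> Q e"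
        unfolding Q_def using k(1-3) t(1) normal
        by (intro CollectI exI[of _ "t k"] exI[of _ "v k"]) (auto simp: dist_norm norm_minus_commute)
      then have "Inf (Q e) \<le> ereal (inner lam (v k - w) / t k)" by (rule Inf_lower)
      also have "\<dots> \<le> ereal (a + \<eta>)" using k(4,5) by simp
      finally show "Inf (Q e) \<le> ereal a + ereal \<eta>" by simp
    qed
  qed
  then show ?thesis by (simp add: lower_curvature_def Q_def)
qed

lemma regular_normal_cone_subset_limiting_normal_cone:
  "regular_normal_cone C z \<subseteq> limiting_normal_cone C z"
proof
  fix v assume v: "v \<in> regular_normal_cone C z"
  then have "z \<in> C" by (simp add: regular_normal_cone_def)
  with v show "v \<in> limiting_normal_cone C z"
    unfolding limiting_normal_cone_def by (intro CollectI conjI exI[of _ "\<lambda>_. z"] exI[of _ "\<lambda>_. v"]) auto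
qed

lemma lower_curvature_bound_at_limit:
  fixes g :: "'a::real_normed_vector \<Rightarrow> 'b::real_inner" and g' g'' :: "'a \<Rightarrow> ('a \<Rightarrow>\<^sub>L 'b)"
  assumes U: "open U" "xbar \<in> U" "\<forall>x\<in>U. (g has_derivative blinfun_apply (g' x)) (at x)"
    and twice: "(g' has_derivative g'') (at xbar)"
    and y: "\<forall>k. y k \<noteq> xbar" "y \<longlonglongrightarrow> xbar" "(\<lambda>k. sgn (y k - xbar)) \<longlonglongrightarrow> u"
    and c: "\<forall>k. sgn (g (y k) - c k) \<in> limiting_normal_cone C (c k)"
      "(\<lambda>k. sgn (g (y k) - c k)) \<longlonglongrightarrow> lam"
      "(\<lambda>k. (1 / norm (y k - xbar)) *\<^sub>R (c k - g xbar)) \<longlonglongrightarrow> g' xbar u"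
    and orth: "\<forall>v. inner lam (g' xbar v) = 0" and "lam \<noteq> 0"
  shows "lower_curvature C lam (g xbar) (g' xbar u) \<le> ereal (1/2 * inner lam (g'' u u))"
proof -
  define t where "t k = norm (y k - xbar)" for k
  define v where "v k = (1 / t k) *\<^sub>R (c k - g xbar)" for k
  define \<mu> where "\<mu> k = sgn (g (y k) - c k)" for k
  define E where "E k = inner lam (g (y k) - g xbar - g' xbar (y k - xbar))" for k
  have t: "\<forall>k. t k > 0" "t \<longlonglongrightarrow> 0"
    using y(1) tendsto_norm[OF LIM_zero[OF y(2)]] by (auto simp: t_def[abs_def])
  have lim: "v \<longlonglongrightarrow> g' xbar u" "\<mu> \<longlonglongrightarrow> lam"
    using c(2,3) by (simp_all add: v_def[abs_def] t_def \<mu>_def[abs_def])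
  have normal: "\<forall>k. \<mu> k \<in> limiting_normal_cone C (g xbar + t k *\<^sub>R v k)"
    using c(1) t(1) by (simp add: \<mu>_def v_def less_imp_neq[symmetric])
  have "(\<lambda>k. E k / (t k)\<^sup>2) \<longlonglongrightarrow> 1/2 * inner lam (g'' u u)"
    unfolding E_def t_def by (rule inner_second_order_quotient_tendsto[OF U twice y])
  moreover
  \<comment> \<open>\<open>c\<^sub>k = g y\<^sub>k - m\<^sub>k \<mu>\<^sub>k\<close>, and the term \<open>m\<^sub>k \<langle>lam, \<mu>\<^sub>k\<rangle>\<close> can be dropped once \<open>\<langle>lam, \<mu>\<^sub>k\<rangle> > 0\<close>.\<close>
  have "\<forall>\<^sub>F k in sequentially. inner lam (v k - g' xbar u) / t k \<le> E k / (t k)\<^sup>2"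
  proof -
    have "(\<lambda>k. inner lam (\<mu> k)) \<longlonglongrightarrow> inner lam lam" using lim(2) by (intro tendsto_intros)
    then have "\<forall>\<^sub>F k in sequentially. inner lam (\<mu> k) > 0"
      using \<open>lam \<noteq> 0\<close> by (intro order_tendstoD(1)) auto
    then show ?thesis
    proof eventually_elim
      case (elim k)
      define m where "m = norm (g (y k) - c k)"
      have "c k = g (y k) - m *\<^sub>R \<mu> k"
        by (cases "g (y k) = c k") (simp_all add: m_def \<mu>_def sgn_div_norm)
      then have "c k - g xbar = (g (y k) - g xbar - g' xbar (y k - xbar)) + g' xbar (y k - xbar) - m *\<^sub>R \<mu> k"
        by simp
      then have "inner lam (c k - g xbar) = E k - m * inner lam (\<mu> k)"
        using orth by (simp add: E_def inner_diff_right inner_add_right)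
      then have "inner lam (v k - g' xbar u) = (E k - m * inner lam (\<mu> k)) / t k"
        using orth by (simp add: v_def inner_diff_right)
      also have "\<dots> \<le> E k / t k"
        using elim t(1) by (intro divide_right_mono) (auto simp: m_def less_imp_le)
      finally have "inner lam (v k - g' xbar u) / t k \<le> E k / t k / t k"
        by (rule divide_right_mono) (use t(1) in \<open>auto simp: less_imp_le\<close>)
      then show ?case by (simp add: power2_eq_square)
    qed
  qed
  ultimately show ?thesis by (rule lower_curvature_le_of_sequences[OF t lim normal, rotated])
qed

section \<open>Limits of asymptotically stationary sequences\<close>

lemma inner_limit_normal_vanishes:
  fixes \<mu> :: "nat \<Rightarrow> 'b::real_inner" and A :: "nat \<Rightarrow> ('a::real_normed_vector \<Rightarrow>\<^sub>L 'b)"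
  assumes lim: "\<mu> \<longlonglongrightarrow> lam" "A \<longlonglongrightarrow> A0" and \<beta>: "\<beta> \<longlonglongrightarrow> 0"
    and bound: "\<forall>k. \<bar>inner (\<mu> k) (A k v)\<bar> \<le> \<beta> k * norm v"
  shows "inner lam (A0 v) = 0"
proof (rule LIMSEQ_unique)
  have "(\<lambda>k. A k v) \<longlonglongrightarrow> A0 v" using blinfun.tendsto[OF lim(2) tendsto_const] .
  with lim(1) show "(\<lambda>k. inner (\<mu> k) (A k v)) \<longlonglongrightarrow> inner lam (A0 v)" by (rule tendsto_inner)
  have "(\<lambda>k. \<beta> k * norm v) \<longlonglongrightarrow> 0" using tendsto_mult_left_zero[OF \<beta>] by simp
  then show "(\<lambda>k. inner (\<mu> k) (A k v)) \<longlonglongrightarrow> 0"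
    by (rule Lim_null_comparison[rotated]) (use bound in simp)
qed

lemma adjoint_eq_zero_of_orthogonal_range:
  fixes f :: "'a::euclidean_space \<Rightarrow> 'b::euclidean_space"
  assumes "linear f" "\<forall>v. inner lam (f v) = 0"
  shows "adjoint f lam = 0"
proof -
  have "inner (adjoint f lam) (adjoint f lam) = inner (f (adjoint f lam)) lam"
    using adjoint_works[OF assms(1)] by simp
  then show ?thesis using assms(2) by (simp add: inner_commute)
qed

lemma difference_quotient_tendsto_derivative_direction:
  fixes g :: "'a::real_normed_vector \<Rightarrow> 'b::real_normed_vector"
  assumes deriv: "(g has_derivative G) (at xbar)"
    and y: "\<forall>k. y k \<noteq> xbar" "y \<longlonglongrightarrow> xbar" "(\<lambda>k. sgn (y k - xbar)) \<longlonglongrightarrow> u"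
    and c: "(\<lambda>k. norm (g (y k) - c k) / norm (y k - xbar)) \<longlonglongrightarrow> 0"
  shows "(\<lambda>k. (1 / norm (y k - xbar)) *\<^sub>R (c k - g xbar)) \<longlonglongrightarrow> G u"
proof -
  have bl: "bounded_linear G" using deriv by (simp add: has_derivative_def)
  have "filterlim (\<lambda>k. y k - xbar) (at 0) sequentially"
    using y(1,2) by (intro filterlim_atI) (auto simp: LIM_zero_iff)
  from filterlim_compose[OF deriv[unfolded has_derivative_at, THEN conjunct2] this]
  have "(\<lambda>k. norm (g (y k) - g xbar - G (y k - xbar)) / norm (y k - xbar)) \<longlonglongrightarrow> 0"
    by simp
  then have remainder: "(\<lambda>k. (1 / norm (y k - xbar)) *\<^sub>R (g (y k) - g xbar - G (y k - xbar))) \<longlonglongrightarrow> 0"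
    by (rule Lim_null_comparison[rotated]) simp
  have gap: "(\<lambda>k. (1 / norm (y k - xbar)) *\<^sub>R (g (y k) - c k)) \<longlonglongrightarrow> 0"
    using c by (rule Lim_null_comparison[rotated]) simp
  have "(1 / norm (y k - xbar)) *\<^sub>R (c k - g xbar) =
      (1 / norm (y k - xbar)) *\<^sub>R (g (y k) - g xbar - G (y k - xbar)) + G (sgn (y k - xbar))
      - (1 / norm (y k - xbar)) *\<^sub>R (g (y k) - c k)" for k
  proof -
    have "G (sgn (y k - xbar)) = (1 / norm (y k - xbar)) *\<^sub>R G (y k - xbar)"
      unfolding sgn_div_norm by (simp add: linear.scaleR[OF bounded_linear.linear[OF bl]] divide_inverse)
    then show ?thesis by (simp add: algebra_simps)
  qed
  moreover have "(\<lambda>k. (1 / norm (y k - xbar)) *\<^sub>R (g (y k) - g xbar - G (y k - xbar)) + G (sgn (y k - xbar))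
      - (1 / norm (y k - xbar)) *\<^sub>R (g (y k) - c k)) \<longlonglongrightarrow> 0 + G u - 0"
    by (intro tendsto_diff tendsto_add remainder gap bounded_linear.tendsto[OF bl y(3)])
  ultimately show ?thesis by simp
qed

lemma asymptotically_stationary_limit_critical:
  fixes g :: "'a::euclidean_space \<Rightarrow> 'b::euclidean_space" and g' g'' :: "'a \<Rightarrow> ('a \<Rightarrow>\<^sub>L 'b)"
  assumes U: "open U" "xbar \<in> U" "\<forall>x\<in>U. (g has_derivative blinfun_apply (g' x)) (at x)"
    and cont: "isCont g' xbar" and twice: "(g' has_derivative g'') (at xbar)"
    and seq: "asymptotically_stationary g (\<lambda>x. blinfun_apply (g' x)) C xbar y c \<beta>"
    and u: "(\<lambda>k. sgn (y k - xbar)) \<longlonglongrightarrow> u"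
    and lam: "(\<lambda>k. sgn (g (y k) - c k)) \<longlonglongrightarrow> lam" "lam \<noteq> 0"
  shows "g' xbar u \<in> tangent_cone C (g xbar) \<and> lam \<in> dir_normal_cone C (g xbar) (g' xbar u)
    \<and> adjoint (blinfun_apply (g' xbar)) lam = 0
    \<and> lower_curvature C lam (g xbar) (g' xbar u) \<le> ereal (1/2 * inner lam (g'' u u))"
proof -
  note seq = seq[unfolded asymptotically_stationary_def]
  have orth: "\<forall>v. inner lam (g' xbar v) = 0"
    using inner_limit_normal_vanishes[OF lam(1) isCont_tendsto_compose[OF cont] _] seq by blast
  define t where "t k = norm (y k - xbar)" for k
  define v where "v k = (1 / t k) *\<^sub>R (c k - g xbar)" for k
  have t: "\<forall>k. t k > 0" "t \<longlonglongrightarrow> 0"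
    using seq tendsto_norm[OF LIM_zero[of y xbar]] by (auto simp: t_def[abs_def])
  have v: "v \<longlonglongrightarrow> g' xbar u"
    using difference_quotient_tendsto_derivative_direction[of g _ xbar y u c] U u seq
    by (auto simp: v_def[abs_def] t_def)
  have c: "c k = g xbar + t k *\<^sub>R v k" for k using t(1)[rule_format, of k] by (simp add: v_def)
  have "g' xbar u \<in> tangent_cone C (g xbar)"
    unfolding tangent_cone_def using t v seq c by (intro CollectI exI[of _ t] exI[of _ v]) auto
  moreover have "lam \<in> dir_normal_cone C (g xbar) (g' xbar u)"
    unfolding dir_normal_cone_def using t v lam(1) seq c
    by (intro CollectI exI[of _ t] exI[of _ v] exI[of _ "\<lambda>k. sgn (g (y k) - c k)"]) auto
  moreover have "adjoint (blinfun_apply (g' xbar)) lam = 0"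
    using orth bounded_linear.linear[OF blinfun.bounded_linear_right]
    by (rule adjoint_eq_zero_of_orthogonal_range[rotated])
  moreover have "lower_curvature C lam (g xbar) (g' xbar u) \<le> ereal (1/2 * inner lam (g'' u u))"
    using regular_normal_cone_subset_limiting_normal_cone seq v
    by (intro lower_curvature_bound_at_limit[OF U twice _ _ u _ lam(1) _ orth lam(2)])
      (auto simp: v_def[abs_def] t_def)
  ultimately show ?thesis by blast
qed

lemma asymptotically_stationary_critical_pair:
  fixes g :: "'a::euclidean_space \<Rightarrow> 'b::euclidean_space" and g' g'' :: "'a \<Rightarrow> ('a \<Rightarrow>\<^sub>L 'b)"
  assumes U: "open U" "xbar \<in> U" "\<forall>x\<in>U. (g has_derivative blinfun_apply (g' x)) (at x)"
    and cont: "isCont g' xbar" and twice: "(g' has_derivative g'') (at xbar)"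
    and seq: "asymptotically_stationary g (\<lambda>x. blinfun_apply (g' x)) C xbar y c \<beta>"
  obtains u lam where "u \<noteq> 0" "lam \<noteq> 0"
    "g' xbar u \<in> tangent_cone C (g xbar)" "lam \<in> dir_normal_cone C (g xbar) (g' xbar u)"
    "adjoint (blinfun_apply (g' xbar)) lam = 0"
    "lower_curvature C lam (g xbar) (g' xbar u) \<le> ereal (1/2 * inner lam (g'' u u))"
proof -
  have "\<forall>k. (sgn (y k - xbar), sgn (g (y k) - c k)) \<in> sphere (0::'a) 1 \<times> sphere (0::'b) 1"
    using seq by (simp add: asymptotically_stationary_def norm_sgn)
  with compact_imp_seq_compact[OF compact_Times[OF compact_sphere compact_sphere]]
  obtain l r where l: "l \<in> sphere (0::'a) 1 \<times> sphere (0::'b) 1" "strict_mono r"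
      "((\<lambda>k. (sgn (y k - xbar), sgn (g (y k) - c k))) \<circ> r) \<longlonglongrightarrow> l"
    by (rule seq_compactE)
  have lim: "(\<lambda>k. sgn ((y \<circ> r) k - xbar)) \<longlonglongrightarrow> fst l"
      "(\<lambda>k. sgn (g ((y \<circ> r) k) - (c \<circ> r) k)) \<longlonglongrightarrow> snd l"
    using tendsto_fst[OF l(3)] tendsto_snd[OF l(3)] by (simp_all add: o_def)
  have "fst l \<noteq> 0" "snd l \<noteq> 0" using l(1) by auto
  with asymptotically_stationary_limit_critical[OF U cont twice
      asymptotically_stationary_subseq[OF seq l(2)] lim]
  show thesis using that by blast
qed

theorem corollary4p6:
  fixes g :: "'a::euclidean_space \<Rightarrow> 'b::euclidean_space"
    and C :: "'b set"
    and xbar :: 'a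
    and g' :: "'a \<Rightarrow> ('a \<Rightarrow>\<^sub>L 'b)"
    and g'' :: "'a \<Rightarrow> ('a \<Rightarrow>\<^sub>L 'b)"
  assumes closedC: "closed C"
    and feas: "g xbar \<in> C"
    and C1: "\<exists>U. open U \<and> xbar \<in> U \<and> (\<forall>x\<in>U. (g has_derivative blinfun_apply (g' x)) (at x))
              \<and> continuous_on U g'"
    and twice: "(g' has_derivative g'') (at xbar)"
    and SOSC: "\<And>u lam. u \<noteq> 0 \<Longrightarrow>
        blinfun_apply (g' xbar) u \<in> tangent_cone C (g xbar) \<Longrightarrow>
        lam \<in> dir_normal_cone C (g xbar) (blinfun_apply (g' xbar) u) \<Longrightarrow>
        adjoint (blinfun_apply (g' xbar)) lam = 0 \<Longrightarrow>
        ereal (1/2 * inner lam (blinfun_apply (g'' u) u))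
          \<ge> lower_curvature C lam (g xbar) (blinfun_apply (g' xbar) u) \<Longrightarrow>
        lam = 0"
  shows "metrically_subregular (\<lambda>x. (\<lambda>c. g x - c) ` C) xbar 0"
proof (rule ccontr)
  assume not_subregular: "\<not> metrically_subregular (\<lambda>x. (\<lambda>c. g x - c) ` C) xbar 0"
  obtain U where U: "open U" "xbar \<in> U" "\<forall>x\<in>U. (g has_derivative blinfun_apply (g' x)) (at x)"
    and "continuous_on U g'" using C1 by blast
  then have cont: "isCont g' xbar" by (simp add: continuous_on_eq_continuous_at)
  have "\<not> (\<exists>\<kappa>\<ge>0. \<exists>V. open V \<and> xbar \<in> V \<and> (\<forall>x\<in>V. infdist x (g -` C) \<le> \<kappa> * infdist (g x) C))"
    using not_subregular metrically_subregular_image_diff_iff[of g, OF feas] by blast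
  then obtain y c \<beta> where "asymptotically_stationary g (\<lambda>x. blinfun_apply (g' x)) C xbar y c \<beta>"
    using asymptotically_stationary_sequenceE[OF closedC feas U] by blast
  then obtain u lam where "u \<noteq> 0" "lam \<noteq> 0"
    "g' xbar u \<in> tangent_cone C (g xbar)" "lam \<in> dir_normal_cone C (g xbar) (g' xbar u)"
    "adjoint (blinfun_apply (g' xbar)) lam = 0"
    "lower_curvature C lam (g xbar) (g' xbar u) \<le> ereal (1/2 * inner lam (g'' u u))"
    by (rule asymptotically_stationary_critical_pair[OF U cont twice])
  with SOSC show False by blast
qed

end
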